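(* Let $T$ be a tree of order $t\ge 2$ and let $\pi=(d_1,\dots,d_n)$ be a nonincreasing graphic sequence with $n\ge t$. If $d_{t-1}\ge t-1$, then $\pi$ is potentially $T$-graphic.
   Context: All graphs are finite and simple. A sequence of nonnegative integers $\pi=(d_1,\dots,d_n)$ with $d_1\ge d_2\ge\dots\ge d_n$ is graphic if some graph of order $n$ has degree sequence $\pi$; such a graph is a realization of $\pi$. For a graph $H$, a graphic sequence $\pi$ is potentially $H$-graphic if some realization of $\pi$ contains $H$ as a subgraph. *)

theory Defs
  imports Main
begin

definition simple_graph :: "'a set \<Rightarrow> 'a set set \<Rightarrow> bool" where
  "simple_graph V E \<longleftrightarrow> finite V \<and>
     (\<forall>e\<in>E. \<exists>u v. u \<in> V \<and> v \<in> V \<and> u \<noteq> v \<and> e = {u, v})"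

definition adj :: "'a set set \<Rightarrow> 'a \<Rightarrow> 'a \<Rightarrow> bool" where
  "adj E u v \<longleftrightarrow> u \<noteq> v \<and> {u, v} \<in> E"

definition connected_graph :: "'a set \<Rightarrow> 'a set set \<Rightarrow> bool" where
  "connected_graph V E \<longleftrightarrow> (\<forall>u\<in>V. \<forall>v\<in>V. (adj E)\<^sup>*\<^sup>* u v)"

definition has_cycle :: "'a set \<Rightarrow> 'a set set \<Rightarrow> bool" where
  "has_cycle V E \<longleftrightarrow> (\<exists>vs. length vs \<ge> 3 \<and> distinct vs \<and> set vs \<subseteq> V \<and>
      (\<forall>i. i + 1 < length vs \<longrightarrow> adj E (vs ! i) (vs ! (i + 1))) \<and>
      adj E (last vs) (hd vs))"

definition is_tree :: "'a set \<Rightarrow> 'a set set \<Rightarrow> bool" where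
  "is_tree V E \<longleftrightarrow> simple_graph V E \<and> V \<noteq> {} \<and> connected_graph V E \<and> \<not> has_cycle V E"

definition degree :: "'a set set \<Rightarrow> 'a \<Rightarrow> nat" where
  "degree E v = card {e \<in> E. v \<in> e}"

text \<open>A realization of d = (d_1,...,d_n) (0-indexed list): a simple graph on {0..<n}
  in which vertex i has degree d ! i.\<close>
definition is_realization :: "nat list \<Rightarrow> nat set set \<Rightarrow> bool" where
  "is_realization d E \<longleftrightarrow> simple_graph {0..<length d} E \<and>
     (\<forall>i < length d. degree E i = d ! i)"

definition graphic :: "nat list \<Rightarrow> bool" where
  "graphic d \<longleftrightarrow> (\<exists>E. is_realization d E)"

definition nonincreasing :: "nat list \<Rightarrow> bool" where
  "nonincreasing d \<longleftrightarrow> sorted_wrt (\<ge>) d"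

definition contains_subgraph :: "'a set \<Rightarrow> 'a set set \<Rightarrow> 'b set \<Rightarrow> 'b set set \<Rightarrow> bool" where
  "contains_subgraph VH EH V E \<longleftrightarrow> (\<exists>f. inj_on f VH \<and> f ` VH \<subseteq> V \<and>
      (\<forall>u\<in>VH. \<forall>v\<in>VH. {u, v} \<in> EH \<longrightarrow> {f u, f v} \<in> E))"

definition potentially_graphic :: "'a set \<Rightarrow> 'a set set \<Rightarrow> nat list \<Rightarrow> bool" where
  "potentially_graphic VH EH d \<longleftrightarrow> graphic d \<and>
     (\<exists>E. is_realization d E \<and> contains_subgraph VH EH {0..<length d} E)"

end

theory Submission
  imports Defs
begin

text \<open>
  Let \<open>H\<close> be the set of vertices \<open>i\<close> with \<open>d\<^sub>i \<ge> t - 1\<close>; by monotonicity \<open>|H| \<ge> t - 1\<close>.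
  Grow a copy of \<open>T\<close> inside \<open>H\<close> one leaf at a time. To attach a leaf at the image \<open>a\<close> of
  its parent, take \<open>b \<in> H\<close> outside the current copy \<open>U\<close>. Since \<open>deg a \<ge> t - 1 > |U| - 1\<close>,
  \<open>a\<close> has a neighbour \<open>c \<notin> U\<close>; if \<open>c \<notin> H\<close> then \<open>deg c < deg b\<close>, so \<open>b\<close> has a neighbour
  \<open>e\<close> not adjacent to \<open>c\<close>, and the 2-switch \<open>ac, be \<mapsto> ab, ce\<close> makes \<open>b\<close> a neighbour of
  \<open>a\<close> without touching edges inside \<open>U\<close>. The last leaf need not land in \<open>H\<close>, which is why
  only \<open>t - 1\<close> vertices of high degree are required.
\<close>

lemma simple_graph_edgeD:
  "simple_graph V E \<Longrightarrow> {u, v} \<in> E \<Longrightarrow> u \<noteq> v \<and> u \<in> V \<and> v \<in> V"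
  unfolding simple_graph_def by (metis doubleton_eq_iff)

lemma adj_sym: "adj E u v \<Longrightarrow> adj E v u"
  unfolding adj_def by (auto simp: insert_commute)

subsection \<open>Leaves of trees\<close>

definition is_path :: "'a set \<Rightarrow> 'a set set \<Rightarrow> 'a list \<Rightarrow> bool" where
  "is_path V E vs \<longleftrightarrow> distinct vs \<and> set vs \<subseteq> V \<and>
      (\<forall>i. i + 1 < length vs \<longrightarrow> adj E (vs ! i) (vs ! (i + 1)))"

lemma longest_path_exists:
  assumes "finite V" and "is_path V E ws"
  obtains vs where "is_path V E vs" and "\<And>ys. is_path V E ys \<Longrightarrow> length ys \<le> length vs"
proof -
  have "\<forall>ys. is_path V E ys \<longrightarrow> length ys < card V + 1"
    using assms(1) unfolding is_path_def by (metis card_mono distinct_card less_Suc_eq_le Suc_eq_plus1)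
  then show thesis
    using ex_has_greatest_nat[of "is_path V E" ws length] assms(2) that by blast
qed

text \<open>A further neighbour of the first vertex would either prolong the path or close a cycle.\<close>

lemma longest_path_starts_at_leaf:
  assumes sg: "simple_graph V E" and acyclic: "\<not> has_cycle V E"
    and path: "is_path V E vs" and longest: "\<And>ys. is_path V E ys \<Longrightarrow> length ys \<le> length vs"
    and len: "length vs \<ge> 2" and edge: "{vs ! 0, w} \<in> E"
  shows "w = vs ! 1"
proof (rule ccontr)
  assume ne: "w \<noteq> vs ! 1"
  have dist: "distinct vs" and sub: "set vs \<subseteq> V"
    and ad: "\<And>i. i + 1 < length vs \<Longrightarrow> adj E (vs ! i) (vs ! (i + 1))"
    using path unfolding is_path_def by auto
  have xw: "adj E (vs ! 0) w" and wV: "w \<in> V"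
    using simple_graph_edgeD[OF sg edge] edge unfolding adj_def by auto
  show False
  proof (cases "w \<in> set vs")
    case False
    have "is_path V E (w # vs)"
      unfolding is_path_def
    proof (intro conjI allI impI)
      show "distinct (w # vs)" "set (w # vs) \<subseteq> V" using False dist sub wV by auto
      fix i assume i: "i + 1 < length (w # vs)"
      then show "adj E ((w # vs) ! i) ((w # vs) ! (i + 1))"
        using adj_sym[OF xw] ad[of "i - 1"] by (cases i) auto
    qed
    then show False using longest by fastforce
  next
    case True
    then obtain i where i: "i < length vs" "vs ! i = w" by (metis in_set_conv_nth)
    have "i \<noteq> 0" using xw i(2) unfolding adj_def by metis
    have "i \<noteq> 1" using ne i(2) by auto
    define cs where "cs = take (i + 1) vs"
    have "last cs = w" using i unfolding cs_def by (simp add: take_Suc_conv_app_nth)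
    moreover have "hd cs = vs ! 0" using i unfolding cs_def by (cases vs) auto
    ultimately
    have "has_cycle V E"
      unfolding has_cycle_def using \<open>i \<noteq> 0\<close> \<open>i \<noteq> 1\<close> i dist sub ad adj_sym[OF xw]
      by (intro exI[of _ cs]) (auto simp: cs_def dest: in_set_takeD)
    then show False using acyclic by simp
  qed
qed

lemma tree_has_leaf:
  assumes T: "is_tree VT ET" and two: "card VT \<ge> 2"
  obtains l p where "l \<in> VT" "p \<in> VT" "l \<noteq> p" "{l, p} \<in> ET" "\<And>w. {l, w} \<in> ET \<Longrightarrow> w = p"
proof -
  have sg: "simple_graph VT ET" and fin: "finite VT"
    using T unfolding is_tree_def simple_graph_def by auto
  obtain u v where uv: "u \<in> VT" "v \<in> VT" "u \<noteq> v"
    using two card_le_Suc0_iff_eq[OF fin] by fastforce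
  have "(adj ET)\<^sup>*\<^sup>* u v" using T uv unfolding is_tree_def connected_graph_def by auto
  then obtain w where w: "adj ET u w" using uv(3) by (metis converse_rtranclpE)
  have "is_path VT ET [u, w]"
    using w uv simple_graph_edgeD[OF sg] unfolding is_path_def adj_def by (auto simp: less_Suc_eq)
  then obtain vs where vs: "is_path VT ET vs" and longest: "\<And>ys. is_path VT ET ys \<Longrightarrow> length ys \<le> length vs"
    using longest_path_exists[OF fin] by blast
  have len: "length vs \<ge> 2" using longest[OF \<open>is_path VT ET [u, w]\<close>] by simp
  then have "0 < length vs" "1 < length vs" by auto
  then have "adj ET (vs ! 0) (vs ! 1)" "vs ! 0 \<in> VT" "vs ! 1 \<in> VT"
    using vs unfolding is_path_def by (auto dest: nth_mem)
  moreover have "\<And>w. {vs ! 0, w} \<in> ET \<Longrightarrow> w = vs ! 1"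
    using longest_path_starts_at_leaf[OF sg _ vs longest len] T unfolding is_tree_def by blast
  ultimately show thesis using that unfolding adj_def by blast
qed

lemma tree_delete_leaf:
  assumes T: "is_tree VT ET" and l: "l \<in> VT" "p \<in> VT" "l \<noteq> p"
    and leaf: "\<And>w. {l, w} \<in> ET \<Longrightarrow> w = p"
  shows "is_tree (VT - {l}) {e \<in> ET. l \<notin> e}"
proof -
  let ?E = "{e \<in> ET. l \<notin> e}"
  have adjl: "w = p" if "adj ET l w" for w using that leaf unfolding adj_def by auto
  have walk: "(adj ET)\<^sup>*\<^sup>* u v \<Longrightarrow> u \<noteq> l \<Longrightarrow>
     (v \<noteq> l \<longrightarrow> (adj ?E)\<^sup>*\<^sup>* u v) \<and> (v = l \<longrightarrow> (adj ?E)\<^sup>*\<^sup>* u p)" for u v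
  proof (induction rule: rtranclp_induct)
    case (step y z)
    then have IH: "(y \<noteq> l \<longrightarrow> (adj ?E)\<^sup>*\<^sup>* u y) \<and> (y = l \<longrightarrow> (adj ?E)\<^sup>*\<^sup>* u p)"
      by blast
    show ?case
    proof (cases "z = l")
      case True
      then have "y = p" "y \<noteq> l" using adjl adj_sym[OF step(2)] step(2) unfolding adj_def by auto
      then show ?thesis using IH True by simp
    next
      case False
      show ?thesis
      proof (cases "y = l")
        case True
        then show ?thesis using adjl step(2) IH False by simp
      next
        case y: False
        then have "adj ?E y z" using step(2) False unfolding adj_def by auto
        then show ?thesis using IH y False by (simp add: rtranclp.rtrancl_into_rtrancl)
      qed
    qed
  qed simp
  have "connected_graph (VT - {l}) ?E"
    using walk T unfolding connected_graph_def is_tree_def by auto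
  moreover have "\<not> has_cycle (VT - {l}) ?E"
    using T unfolding has_cycle_def adj_def is_tree_def by blast
  moreover have "simple_graph (VT - {l}) ?E"
    using T unfolding simple_graph_def is_tree_def by fastforce
  ultimately show ?thesis unfolding is_tree_def using l by auto
qed

subsection \<open>Neighbourhoods and realizations\<close>

definition neighbours :: "'a set set \<Rightarrow> 'a \<Rightarrow> 'a set" where
  "neighbours E a = {b. {a, b} \<in> E}"

lemma neighbours_subset: "simple_graph V E \<Longrightarrow> neighbours E a \<subseteq> V - {a}"
  unfolding neighbours_def using simple_graph_edgeD by fastforce

lemma degree_eq_card_neighbours:
  assumes sg: "simple_graph V E"
  shows "degree E a = card (neighbours E a)"
proof -
  have "{e \<in> E. a \<in> e} = (\<lambda>b. {a, b}) ` neighbours E a"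
  proof (intro equalityI subsetI)
    fix e assume e: "e \<in> {e \<in> E. a \<in> e}"
    then obtain u v where "e = {u, v}" using sg unfolding simple_graph_def by blast
    then show "e \<in> (\<lambda>b. {a, b}) ` neighbours E a"
      using e by (auto simp: insert_commute image_iff neighbours_def)
  qed (auto simp: neighbours_def)
  moreover have "inj_on (\<lambda>b. {a, b}) (neighbours E a)"
    by (auto simp: inj_on_def doubleton_eq_iff)
  ultimately show ?thesis unfolding degree_def by (simp add: card_image)
qed

lemma is_realization_iff_neighbours:
  "is_realization d E \<longleftrightarrow> simple_graph {0..<length d} E \<and>
     (\<forall>i < length d. card (neighbours E i) = d ! i)"
  unfolding is_realization_def using degree_eq_card_neighbours by metis

lemma finite_neighbours: "is_realization d E \<Longrightarrow> finite (neighbours E a)"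
  unfolding is_realization_def
  by (meson neighbours_subset finite_atLeastLessThan finite_Diff finite_subset)

lemma card_insert_Diff_singleton:
  "finite A \<Longrightarrow> y \<in> A \<Longrightarrow> x \<notin> A \<Longrightarrow> card (insert x (A - {y})) = card A"
  by (metis Diff_iff card_Diff1_less card_Suc_Diff1 card_insert_disjoint finite_Diff less_nat_zero_code)

lemma realization_switch:
  assumes R: "is_realization d E"
    and ac: "{a, c} \<in> E" and be: "{b, e} \<in> E" and ab: "{a, b} \<notin> E" and ce: "{c, e} \<notin> E"
    and dist: "a \<noteq> b" "a \<noteq> e" "b \<noteq> c" "c \<noteq> e"
  shows "is_realization d (insert {a, b} (insert {c, e} (E - {{a, c}, {b, e}})))"
proof -
  let ?E = "insert {a, b} (insert {c, e} (E - {{a, c}, {b, e}}))"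
  have sg: "simple_graph {0..<length d} E" using R unfolding is_realization_def by auto
  note ac' = simple_graph_edgeD[OF sg ac] and be' = simple_graph_edgeD[OF sg be]
  have sg': "simple_graph {0..<length d} ?E" using sg ac' be' dist unfolding simple_graph_def by auto
  have flipped: "{c, a} \<in> E" "{e, b} \<in> E" "{b, a} \<notin> E" "{e, c} \<notin> E"
    using ac be ab ce by (simp_all add: insert_commute)
  have swap: "card (neighbours ?E v) = card (neighbours E v)"
    if "neighbours ?E v = insert x (neighbours E v - {y})" "y \<in> neighbours E v" "x \<notin> neighbours E v"
    for v x y
    using that card_insert_Diff_singleton[OF finite_neighbours[OF R]] by simp
  have "card (neighbours ?E v) = card (neighbours E v)" for v
  proof -
    consider "v = a" | "v = b" | "v = c" | "v = e" | "v \<notin> {a, b, c, e}" by auto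
    then show ?thesis
    proof cases
      case 1 then show ?thesis
        using ac' be' dist ac be ab ce flipped by (intro swap[of _ b c]) (auto simp: neighbours_def doubleton_eq_iff)
    next
      case 2 then show ?thesis
        using ac' be' dist ac be ab ce flipped by (intro swap[of _ a e]) (auto simp: neighbours_def doubleton_eq_iff)
    next
      case 3 then show ?thesis
        using ac' be' dist ac be ab ce flipped by (intro swap[of _ e a]) (auto simp: neighbours_def doubleton_eq_iff)
    next
      case 4 then show ?thesis
        using ac' be' dist ac be ab ce flipped by (intro swap[of _ c b]) (auto simp: neighbours_def doubleton_eq_iff)
    next
      case 5
      then have "neighbours ?E v = neighbours E v" unfolding neighbours_def by (auto simp: doubleton_eq_iff)
      then show ?thesis by simp
    qed
  qed
  then show ?thesis using R sg' unfolding is_realization_iff_neighbours by simp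
qed

lemma neighbour_outside:
  assumes R: "is_realization d E" and a: "a \<in> U" "a < length d"
    and U: "finite U" and deg: "card U \<le> d ! a"
  obtains c where "{a, c} \<in> E" "c \<notin> U"
proof -
  have "\<not> neighbours E a \<subseteq> U"
  proof
    assume "neighbours E a \<subseteq> U"
    moreover have "a \<notin> neighbours E a"
      using neighbours_subset R unfolding is_realization_def by fastforce
    ultimately have "neighbours E a \<subseteq> U - {a}" by blast
    then have "card (neighbours E a) \<le> card (U - {a})" using U by (simp add: card_mono)
    also have "\<dots> < card U" using a U by (intro card_Diff1_less)
    finally show False using R a deg unfolding is_realization_iff_neighbours by simp
  qed
  then show thesis using that unfolding neighbours_def by blast
qed

lemma ex_in_not_in_of_card_less:
  assumes "finite C" and "card C < card B" and "a \<in> C" and "a \<notin> B"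
  shows "\<exists>e\<in>B. e \<noteq> c \<and> e \<notin> C"
proof (rule ccontr)
  assume "\<not> ?thesis"
  then have "B - {c} \<subseteq> C - {a}" using assms(4) by auto
  then have "card (B - {c}) \<le> card (C - {a})" using assms(1) by (simp add: card_mono)
  moreover have "card C > 0" using assms(1,3) card_gt_0_iff by blast
  ultimately show False using assms(2,3) by (auto simp: card_Diff_singleton_if split: if_splits)
qed

lemma realization_attach_high_degree_neighbour:
  fixes d :: "nat list" and k :: nat
  defines "H \<equiv> {i. i < length d \<and> k \<le> d ! i}"
  assumes R: "is_realization d E" and U: "U \<subseteq> {0..<length d}" "card U < k"
    and a: "a \<in> U" "k \<le> d ! a" and H: "k \<le> card H"
  obtains E' b where "is_realization d E'" "b \<in> H - U" "{a, b} \<in> E'" "\<And>x. x \<in> E \<Longrightarrow> x \<subseteq> U \<Longrightarrow> x \<in> E'"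
proof (cases "\<exists>b\<in>H - U. {a, b} \<in> E")
  case True
  then show thesis using that R by blast
next
  case False
  have sg: "simple_graph {0..<length d} E" using R unfolding is_realization_def by auto
  have finU: "finite U" using U finite_subset by blast
  have "\<not> H \<subseteq> U" using card_mono[OF finU, of H] H U(2) by linarith
  then obtain b where b: "b \<in> H - U" by blast
  have "a < length d" "card U \<le> d ! a" using U a by auto
  then obtain c where ac: "{a, c} \<in> E" and c: "c \<notin> U"
    using neighbour_outside[OF R a(1) _ finU] by blast
  have "c < length d" "b < length d" using simple_graph_edgeD[OF sg ac] b unfolding H_def by auto
  moreover have dcb: "d ! c < d ! b" using False ac c b \<open>c < length d\<close> unfolding H_def by auto
  ultimately have "card (neighbours E c) < card (neighbours E b)"
    using R unfolding is_realization_iff_neighbours by simp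
  moreover have ab: "{a, b} \<notin> E" using False b by blast
  then have "a \<in> neighbours E c" "a \<notin> neighbours E b"
    using ac by (simp_all add: neighbours_def insert_commute)
  ultimately obtain e where be: "{b, e} \<in> E" and e: "e \<noteq> c" "{c, e} \<notin> E"
    using ex_in_not_in_of_card_less[OF finite_neighbours[OF R]] unfolding neighbours_def by blast
  have dist: "a \<noteq> b" "a \<noteq> e" "b \<noteq> c"
    using a b ab be dcb by (auto simp: insert_commute)
  show thesis
    using that realization_switch[OF R ac be ab e(2) dist e(1)[symmetric]] b c by blast
qed

subsection \<open>Growing the tree\<close>

definition graph_embedding :: "'a set \<Rightarrow> 'a set set \<Rightarrow> 'b set set \<Rightarrow> ('a \<Rightarrow> 'b) \<Rightarrow> bool" where
  "graph_embedding VH EH E f \<longleftrightarrow> inj_on f VH \<and> (\<forall>u\<in>VH. \<forall>v\<in>VH. {u, v} \<in> EH \<longrightarrow> {f u, f v} \<in> E)"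

lemma contains_subgraph_iff:
  "contains_subgraph VH EH V E \<longleftrightarrow> (\<exists>f. graph_embedding VH EH E f \<and> f ` VH \<subseteq> V)"
  unfolding contains_subgraph_def graph_embedding_def by blast

lemma graph_embedding_transfer:
  assumes "graph_embedding VH EH E f" and "f ` VH \<subseteq> U" and "\<And>x. x \<in> E \<Longrightarrow> x \<subseteq> U \<Longrightarrow> x \<in> E'"
  shows "graph_embedding VH EH E' f"
  using assms unfolding graph_embedding_def by (auto simp: image_subset_iff)

lemma graph_embedding_add_leaf:
  assumes l: "l \<in> VT" "p \<in> VT" "l \<noteq> p" and leaf: "\<And>w. {l, w} \<in> ET \<Longrightarrow> w = p"
    and f: "graph_embedding (VT - {l}) {e \<in> ET. l \<notin> e} E f"
    and b: "b \<notin> f ` (VT - {l})" "{f p, b} \<in> E"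
  shows "graph_embedding VT ET E (f(l := b))"
  unfolding graph_embedding_def
proof (intro conjI ballI impI)
  have "inj_on (f(l := b)) (VT - {l})" using f unfolding graph_embedding_def inj_on_def by auto
  moreover have "(f(l := b)) ` (VT - {l}) = f ` (VT - {l})" by auto
  moreover have "VT = insert l (VT - {l})" using l by auto
  ultimately show "inj_on (f(l := b)) VT" using b(1) by (metis Diff_idemp fun_upd_same inj_on_insert)
  fix u v assume uv: "u \<in> VT" "v \<in> VT" "{u, v} \<in> ET"
  then have "v = p" if "u = l" using leaf that by auto
  moreover have "u = p" if "v = l" using leaf uv that by (auto simp: insert_commute)
  moreover have "{f u, f v} \<in> E" if "u \<noteq> l" "v \<noteq> l" using f uv that unfolding graph_embedding_def by auto
  ultimately show "{(f(l := b)) u, (f(l := b)) v} \<in> E"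
    using l b uv by (cases "u = l"; cases "v = l") (auto simp: insert_commute)
qed

lemma tree_embeds_in_high_degree_vertices:
  fixes d :: "nat list" and k :: nat and VT :: "'a set"
  defines "H \<equiv> {i. i < length d \<and> k \<le> d ! i}"
  assumes "graphic d" and "k \<le> card H" and "is_tree VT ET" and "card VT \<le> k"
  shows "\<exists>E f. is_realization d E \<and> graph_embedding VT ET E f \<and> f ` VT \<subseteq> H"
  using assms(4,5)
proof (induction "card VT" arbitrary: VT ET)
  case 0
  then show ?case unfolding is_tree_def simple_graph_def by simp
next
  case (Suc m)
  note T = \<open>is_tree VT ET\<close>
  have fin: "finite VT" using T unfolding is_tree_def simple_graph_def by simp
  show ?case
  proof (cases m)
    case 0
    then have "card VT = 1" using Suc.hyps(2) by simp
    then obtain x where x: "VT = {x}" by (rule card_1_singletonE)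
    obtain E where E: "is_realization d E" using assms(2) unfolding graphic_def by blast
    have "H \<noteq> {}" using assms(3) Suc.prems(2) \<open>card VT = 1\<close> by auto
    then obtain h where "h \<in> H" by blast
    moreover have "{x, x} \<notin> ET" using T simple_graph_edgeD[of VT ET x x] unfolding is_tree_def by blast
    ultimately show ?thesis
      using E x by (intro exI[of _ E] exI[of _ "\<lambda>_. h"]) (auto simp: graph_embedding_def)
  next
    case (Suc m')
    have "card VT \<ge> 2" using Suc.hyps(2) \<open>m = Suc m'\<close> by simp
    then obtain l p where l: "l \<in> VT" "p \<in> VT" "l \<noteq> p" and leaf: "\<And>w. {l, w} \<in> ET \<Longrightarrow> w = p"
      using tree_has_leaf[OF T] by blast
    have card': "card (VT - {l}) = m" using Suc.hyps(2) l fin by simp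
    then have "card (VT - {l}) \<le> k" using Suc.hyps(2) Suc.prems(2) by simp
    then obtain E f where E: "is_realization d E" and f: "graph_embedding (VT - {l}) {e \<in> ET. l \<notin> e} E f"
      and fH: "f ` (VT - {l}) \<subseteq> H"
      using Suc.hyps(1)[OF card'[symmetric] tree_delete_leaf[OF T l leaf]] by blast
    have U: "f ` (VT - {l}) \<subseteq> {0..<length d}" "card (f ` (VT - {l})) < k"
      using fH card_image_le[OF finite_Diff[OF fin], of f "{l}"] card' Suc.hyps(2) Suc.prems(2)
      unfolding H_def by auto
    obtain E' b where E': "is_realization d E'" and b: "b \<in> H - f ` (VT - {l})" "{f p, b} \<in> E'"
      and keep: "\<And>x. x \<in> E \<Longrightarrow> x \<subseteq> f ` (VT - {l}) \<Longrightarrow> x \<in> E'"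
      using realization_attach_high_degree_neighbour[OF E U, of "f p"] fH l assms(3)
      unfolding H_def by blast
    have "graph_embedding VT ET E' (f(l := b))"
      using graph_embedding_add_leaf[OF l leaf graph_embedding_transfer[OF f _ keep]] b by blast
    moreover have "(f(l := b)) ` VT \<subseteq> H" using fH b l by auto
    ultimately show ?thesis using E' by blast
  qed
qed

lemma card_high_degree_vertices:
  assumes "nonincreasing d" and "0 < k" and "k \<le> length d" and "m \<le> d ! (k - 1)"
  shows "k \<le> card {i. i < length d \<and> m \<le> d ! i}"
proof -
  have "d ! (k - 1) \<le> d ! i" if "i < k" for i
    using assms that sorted_wrt_nth_less[of "(\<ge>)" d i "k - 1"] unfolding nonincreasing_def
    by (cases "i = k - 1") auto
  then have "{0..<k} \<subseteq> {i. i < length d \<and> m \<le> d ! i}" using assms by fastforce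
  then show ?thesis by (metis card_atLeastLessThan card_mono finite_Collect_conjI finite_Collect_less_nat diff_zero)
qed

theorem lemma13:
  fixes VT :: "'a set" and ET :: "'a set set" and d :: "nat list" and t n :: nat
  assumes "is_tree VT ET" and "card VT = t" and "t \<ge> 2"
    and "nonincreasing d" and "graphic d" and "length d = n" and "n \<ge> t"
    and "d ! (t - 2) \<ge> t - 1"
  shows "potentially_graphic VT ET d"
proof -
  let ?H = "{i. i < length d \<and> t - 1 \<le> d ! i}"
  have H: "t - 1 \<le> card ?H"
    using card_high_degree_vertices[OF assms(4), of "t - 1"] assms(3,6-8) by (simp add: numeral_2_eq_2)
  obtain l p where l: "l \<in> VT" "p \<in> VT" "l \<noteq> p" and leaf: "\<And>w. {l, w} \<in> ET \<Longrightarrow> w = p"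
    using tree_has_leaf[OF assms(1)] assms(2,3) by metis
  have fin: "finite VT" using assms(1) unfolding is_tree_def simple_graph_def by simp
  have card': "card (VT - {l}) = t - 1" using assms(2) l fin by simp
  obtain E f where E: "is_realization d E" and f: "graph_embedding (VT - {l}) {e \<in> ET. l \<notin> e} E f"
    and fH: "f ` (VT - {l}) \<subseteq> ?H"
    using tree_embeds_in_high_degree_vertices[OF assms(5) H tree_delete_leaf[OF assms(1) l leaf]] card'
    by auto
  have p: "f p \<in> f ` (VT - {l})" "f p \<in> ?H" using fH l by auto
  have "card (f ` (VT - {l})) \<le> d ! f p"
    using card_image_le[OF finite_Diff[OF fin], of f "{l}"] card' p(2) by simp
  then obtain b where b: "{f p, b} \<in> E" "b \<notin> f ` (VT - {l})"
    using neighbour_outside[OF E p(1)] p(2) fin by blast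
  have "simple_graph {0..<length d} E" using E unfolding is_realization_def by simp
  then have "b < length d" using simple_graph_edgeD b(1) by fastforce
  then have "contains_subgraph VT ET {0..<length d} E"
    using graph_embedding_add_leaf[OF l leaf f b(2,1)] fH l
    unfolding contains_subgraph_iff by (intro exI[of _ "f(l := b)"]) auto
  then show ?thesis unfolding potentially_graphic_def using E assms(5) by blast
qed

end
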